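(* Let $g:S^1\to X$ be a continuous surjection onto a Peano continuum $X$. The following are equivalent: (a) $g$ is arcwise increasing; (b) $g$ is hereditarily irreducible; (c) $g$ is strongly irreducible; (d) $g$ is almost injective; (e) $g$ is irreducible. If moreover $X$ is a Peano graph, these are also equivalent to: (f) $g$ is edge-wise Eulerian and $g^{-1}(\operatorname{Gr}(X))$ is zero-dimensional.
   Context: For a continuous map $g:X\to Y$ between continua: $g$ is almost injective if $\{x: g^{-1}(g(x))=\{x\}\}$ is dense in $X$; irreducible if $g(K)\subsetneq g(X)$ for every proper subcontinuum $K\subsetneq X$; hereditarily irreducible if $g(A)\subsetneq g(B)$ for all subcontinua $A\subsetneq B$; strongly irreducible if $g(A)\subsetneq g(X)$ for every closed $A\subsetneq X$; arcwise increasing if $g(A)\subsetneq g(B)$ for all arcs $A\subsetneq B$. A Peano continuum is a compact connected locally connected metrizable space; a free arc (edge) is an inclusion-maximal open subset homeomorphic to $(0,1)$; $\operatorname{Gr}(X)$ is $X$ minus the union of all edges; a Peano graph is a Peano continuum in which the union of edges is dense. A continuous surjection $g:S^1\to X$ is edge-wise Eulerian if $g^{-1}(x)$ is a singleton for every $x$ lying in an edge. *)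

theory Defs
  imports "HOL-Analysis.Analysis"
begin

definition circle :: "complex set" where
  "circle = sphere 0 1"

definition continuum :: "'a::metric_space set \<Rightarrow> bool" where
  "continuum K \<longleftrightarrow> K \<noteq> {} \<and> compact K \<and> connected K"

definition peano_continuum :: "'a::metric_space set \<Rightarrow> bool" where
  "peano_continuum X \<longleftrightarrow> continuum X \<and> locally connected X"

definition arc_set :: "'a::topological_space set \<Rightarrow> bool" where
  "arc_set A \<longleftrightarrow> A homeomorphic {0..1::real}"

definition almost_injective :: "'a::topological_space set \<Rightarrow> ('a \<Rightarrow> 'b) \<Rightarrow> bool" where
  "almost_injective S g \<longleftrightarrow> S \<subseteq> closure {x \<in> S. {y \<in> S. g y = g x} = {x}}"

definition irreducible_map :: "'a::metric_space set \<Rightarrow> ('a \<Rightarrow> 'b) \<Rightarrow> bool" where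
  "irreducible_map S g \<longleftrightarrow>
     (\<forall>K. K \<subseteq> S \<and> continuum K \<and> K \<noteq> S \<longrightarrow> g ` K \<subset> g ` S)"

definition hereditarily_irreducible :: "'a::metric_space set \<Rightarrow> ('a \<Rightarrow> 'b) \<Rightarrow> bool" where
  "hereditarily_irreducible S g \<longleftrightarrow>
     (\<forall>A B. B \<subseteq> S \<and> continuum A \<and> continuum B \<and> A \<subset> B \<longrightarrow> g ` A \<subset> g ` B)"

definition strongly_irreducible :: "'a::metric_space set \<Rightarrow> ('a \<Rightarrow> 'b) \<Rightarrow> bool" where
  "strongly_irreducible S g \<longleftrightarrow>
     (\<forall>A. closedin (top_of_set S) A \<and> A \<subset> S \<longrightarrow> g ` A \<subset> g ` S)"

definition arcwise_increasing :: "'a::metric_space set \<Rightarrow> ('a \<Rightarrow> 'b) \<Rightarrow> bool" where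
  "arcwise_increasing S g \<longleftrightarrow>
     (\<forall>A B. B \<subseteq> S \<and> arc_set A \<and> arc_set B \<and> A \<subset> B \<longrightarrow> g ` A \<subset> g ` B)"

definition edge :: "'a::metric_space set \<Rightarrow> 'a set \<Rightarrow> bool" where
  "edge X E \<longleftrightarrow> openin (top_of_set X) E \<and> E homeomorphic {0<..<1::real} \<and>
     (\<forall>F. openin (top_of_set X) F \<and> F homeomorphic {0<..<1::real} \<and> E \<subseteq> F \<longrightarrow> F = E)"

definition edge_union :: "'a::metric_space set \<Rightarrow> 'a set" where
  "edge_union X = \<Union>{E. edge X E}"

definition Gr :: "'a::metric_space set \<Rightarrow> 'a set" where
  "Gr X = X - edge_union X"

definition peano_graph :: "'a::metric_space set \<Rightarrow> bool" where
  "peano_graph X \<longleftrightarrow> peano_continuum X \<and> X \<subseteq> closure (edge_union X)"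

definition edgewise_eulerian :: "'a::metric_space set \<Rightarrow> 'b::metric_space set \<Rightarrow> ('a \<Rightarrow> 'b) \<Rightarrow> bool" where
  "edgewise_eulerian S X g \<longleftrightarrow>
     (\<forall>x \<in> edge_union X. \<exists>t. {s \<in> S. g s = x} = {t})"

text \<open>Zero-dimensional (small inductive dimension at most 0): every point has arbitrarily
  small relatively clopen neighbourhoods.\<close>
definition zero_dimensional :: "'a::metric_space set \<Rightarrow> bool" where
  "zero_dimensional A \<longleftrightarrow>
     (\<forall>x \<in> A. \<forall>U. open U \<and> x \<in> U \<longrightarrow>
        (\<exists>V. openin (top_of_set A) V \<and> closedin (top_of_set A) V \<and> x \<in> V \<and> V \<subseteq> U))"

end

theory Submission
  imports Defs
begin

(* Almost injectivity is the pivot. If the points with a one-point fibre are dense, every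
   nonempty open set of the circle contains such a point, so the image shrinks whenever an open
   set is removed; and a proper subcontinuum of a subcontinuum B of the circle misses an open arc
   of B. Conversely, if g is irreducible, complements of small open arcs are proper subcontinua,
   so near every point there are points without a twin (a point of the same fibre) at distance
   at least e; these form dense open sets and Baire's theorem makes the injective points dense.

   For a Peano graph X, the preimage of Gr(X) contains no open arc: by strong irreducibility
   the image of its complement misses a point of X, hence an edge point. On the circle this is
   zero-dimensionality. On the preimage of an edge the map has a real coordinate; two preimages
   of one edge point would give three arcs issuing from the same level, two of which leave it
   on the same side, and an injective point on one of them would have a twin on the other. *)

section \<open>Arcs of the circle\<close>

lemma cis_in_circle [simp]: "cis x \<in> circle"
  by (simp add: circle_def)

lemma continuous_on_cis_id [continuous_intros]: "continuous_on A cis"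
  using continuous_on_cis[OF continuous_on_id] by simp

lemma compact_circle: "compact circle"
  by (simp add: circle_def)

lemma cis_Arg_circle: "z \<in> circle \<Longrightarrow> cis (Arg z) = z"
  by (metis cis_rcis_eq circle_def mem_sphere_0 rcis_cmod_Arg)

lemma cis_eq_imp_eq:
  assumes "cis x = cis y" "\<bar>x - y\<bar> < 2*pi"
  shows "x = y"
proof -
  have "\<i> * complex_of_real x = \<i> * complex_of_real y"
    by (rule exp_complex_eqI[rotated]) (use assms in \<open>simp_all add: cis_conv_exp\<close>)
  then show ?thesis by simp
qed

lemma circle_eq_cis:
  assumes "z \<in> circle"
  obtains \<phi> where "a \<le> \<phi>" "\<phi> < a + 2*pi" "z = cis \<phi>"
proof -
  define k where "k = \<lfloor>(Arg z - a) / (2*pi)\<rfloor>"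
  have "2*pi*k \<le> Arg z - a" "Arg z - a < 2*pi*(k + 1)"
    using floor_divide_lower[of "2*pi"] floor_divide_upper[of "2*pi"] unfolding k_def
    by (simp_all add: mult.commute)
  moreover have "cis (Arg z - 2*pi*k) = z"
    using cis_Arg_circle[OF assms] by (simp add: cis_divide[symmetric] cis_multiple_2pi)
  ultimately show thesis
    by (intro that[of "Arg z - 2*pi*k"]) (auto simp: algebra_simps)
qed

lemma circle_minus_open_arc:
  assumes "a < b" "b \<le> a + 2*pi"
  shows "circle - cis ` {a<..<b} = cis ` {b..a + 2*pi}"
proof
  show "circle - cis ` {a<..<b} \<subseteq> cis ` {b..a + 2*pi}"
  proof
    fix z assume z: "z \<in> circle - cis ` {a<..<b}"
    then obtain \<phi> where \<phi>: "a \<le> \<phi>" "\<phi> < a + 2*pi" "z = cis \<phi>"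
      using circle_eq_cis by blast
    show "z \<in> cis ` {b..a + 2*pi}"
    proof (cases "\<phi> = a")
      case True
      then have "z = cis (a + 2*pi)" using \<phi> by (simp add: cis_mult[symmetric])
      then show ?thesis using assms by auto
    next
      case False
      have "\<not> \<phi> < b"
      proof
        assume "\<phi> < b"
        then have "z \<in> cis ` {a<..<b}" using False \<phi> by auto
        then show False using z by blast
      qed
      then show ?thesis using \<phi> by auto
    qed
  qed
  have arc_disjoint: "cis y \<notin> cis ` {a<..<b}" if "y \<in> {b..a + 2*pi}" for y
  proof
    assume "cis y \<in> cis ` {a<..<b}"
    then obtain x where "x \<in> {a<..<b}" "cis y = cis x" by blast
    then have "y = x" by (intro cis_eq_imp_eq) (use that in auto)
    then show False using that \<open>x \<in> {a<..<b}\<close> by simp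
  qed
  show "cis ` {b..a + 2*pi} \<subseteq> circle - cis ` {a<..<b}"
    using arc_disjoint by (intro image_subsetI) simp
qed

lemma circle_minus_closed_arc:
  assumes "a < b" "b \<le> a + 2*pi"
  shows "circle - cis ` {b..a + 2*pi} = cis ` {a<..<b}"
proof -
  have "cis ` {a<..<b} \<subseteq> circle"
    by (rule image_subsetI) simp
  then show ?thesis
    using circle_minus_open_arc[OF assms] by blast
qed

lemma compact_closed_arc: "compact (cis ` {c..d})"
  by (intro compact_continuous_image continuous_intros) auto

lemma continuum_closed_arc: "c \<le> d \<Longrightarrow> continuum (cis ` {c..d})"
  unfolding continuum_def
  by (simp add: compact_closed_arc connected_continuous_image continuous_on_cis)

lemma openin_circle_open_arc:
  assumes "a < b" "b \<le> a + 2*pi"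
  shows "openin (top_of_set circle) (cis ` {a<..<b})"
proof -
  have "cis ` {a<..<b} = circle \<inter> - cis ` {b..a + 2*pi}"
    using circle_minus_open_arc[OF assms] by (auto simp: circle_def)
  moreover have "open (- cis ` {b..a + 2*pi})"
    by (intro open_Compl compact_imp_closed compact_closed_arc)
  ultimately show ?thesis
    by (simp add: openin_open_Int)
qed

lemma arc_set_closed_arc:
  assumes "c < d" "d - c < 2*pi"
  shows "arc_set (cis ` {c..d})"
proof -
  have "inj_on cis {c..d}"
    by (rule inj_onI, rule cis_eq_imp_eq) (use assms in auto)
  then have "{c..d} homeomorphic cis ` {c..d}"
    by (rule homeomorphic_compact[OF compact_Icc continuous_on_cis_id refl])
  then have "cis ` {c..d} homeomorphic {c..d}"
    using homeomorphic_sym by blast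
  then show ?thesis
    unfolding arc_set_def
    using homeomorphic_closed_intervals_real[OF assms(1) zero_less_one] homeomorphic_trans by blast
qed

(* The bound \<delta> \<le> 1 keeps every arc used below shorter than 2\<pi>, where cis is injective. *)
lemma closed_arc_in_open:
  assumes "open U" "cis \<theta> \<in> U"
  obtains \<delta> where "0 < \<delta>" "\<delta> \<le> 1" "cis ` {\<theta>-\<delta>..\<theta>+\<delta>} \<subseteq> U"
proof -
  have "open (cis -` U)"
    using assms(1) by (intro open_vimage continuous_intros)
  then obtain e where e: "e > 0" "ball \<theta> e \<subseteq> cis -` U"
    using assms(2) open_contains_ball by blast
  have "{\<theta> - min (e/2) 1..\<theta> + min (e/2) 1} \<subseteq> ball \<theta> e"
    using e by (auto simp: dist_real_def)
  then have "cis ` {\<theta> - min (e/2) 1..\<theta> + min (e/2) 1} \<subseteq> U"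
    using e(2) by blast
  then show thesis
    using e(1) by (intro that) simp_all
qed

lemma circle_disjoint_arcs_in_open:
  assumes "open T" "cis \<alpha> \<in> T" "cis \<beta> \<in> T" "cis \<alpha> \<noteq> cis \<beta>"
  obtains \<delta> where "0 < \<delta>" "\<delta> \<le> 1" "cis ` {\<alpha>-\<delta>..\<alpha>+\<delta>} \<subseteq> T" "cis ` {\<beta>-\<delta>..\<beta>+\<delta>} \<subseteq> T"
    "cis ` {\<alpha>-\<delta>..\<alpha>+\<delta>} \<inter> cis ` {\<beta>-\<delta>..\<beta>+\<delta>} = {}"
proof -
  define \<rho> where "\<rho> = dist (cis \<alpha>) (cis \<beta>) / 2"
  have "0 < \<rho>"
    using assms(4) by (simp add: \<rho>_def)
  have balls: "ball (cis \<alpha>) \<rho> \<inter> ball (cis \<beta>) \<rho> = {}"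
  proof -
    have False if "dist (cis \<alpha>) x < \<rho>" "dist (cis \<beta>) x < \<rho>" for x
      using that dist_triangle[of "cis \<alpha>" "cis \<beta>" x] by (simp add: \<rho>_def dist_commute)
    then show ?thesis
      by auto
  qed
  obtain \<delta>1 where \<delta>1: "0 < \<delta>1" "\<delta>1 \<le> 1" "cis ` {\<alpha>-\<delta>1..\<alpha>+\<delta>1} \<subseteq> T \<inter> ball (cis \<alpha>) \<rho>"
    using closed_arc_in_open[of "T \<inter> ball (cis \<alpha>) \<rho>" \<alpha>] assms(1,2) \<open>0 < \<rho>\<close> by auto
  obtain \<delta>2 where \<delta>2: "0 < \<delta>2" "\<delta>2 \<le> 1" "cis ` {\<beta>-\<delta>2..\<beta>+\<delta>2} \<subseteq> T \<inter> ball (cis \<beta>) \<rho>"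
    using closed_arc_in_open[of "T \<inter> ball (cis \<beta>) \<rho>" \<beta>] assms(1,3) \<open>0 < \<rho>\<close> by auto
  define \<delta> where "\<delta> = min \<delta>1 \<delta>2"
  have A: "cis ` {\<alpha>-\<delta>..\<alpha>+\<delta>} \<subseteq> T \<inter> ball (cis \<alpha>) \<rho>"
    by (rule order_trans[OF image_mono \<delta>1(3)]) (auto simp: \<delta>_def)
  have B: "cis ` {\<beta>-\<delta>..\<beta>+\<delta>} \<subseteq> T \<inter> ball (cis \<beta>) \<rho>"
    by (rule order_trans[OF image_mono \<delta>2(3)]) (auto simp: \<delta>_def)
  show thesis
  proof (rule that)
    show "0 < \<delta>" "\<delta> \<le> 1"
      using \<delta>1(1,2) \<delta>2(1,2) by (simp_all add: \<delta>_def)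
    show "cis ` {\<alpha>-\<delta>..\<alpha>+\<delta>} \<subseteq> T" "cis ` {\<beta>-\<delta>..\<beta>+\<delta>} \<subseteq> T"
      using A B by blast+
    show "cis ` {\<alpha>-\<delta>..\<alpha>+\<delta>} \<inter> cis ` {\<beta>-\<delta>..\<beta>+\<delta>} = {}"
      using A B balls by blast
  qed
qed

lemma closed_arc_subset_insert_open_arc:
  shows "l \<le> \<phi> \<Longrightarrow> \<phi> < u \<Longrightarrow> cis ` {l..\<phi>} \<subseteq> insert (cis l) (cis ` {l<..<u})"
    and "l < \<phi> \<Longrightarrow> \<phi> \<le> u \<Longrightarrow> cis ` {\<phi>..u} \<subseteq> insert (cis u) (cis ` {l<..<u})"
  by (force simp: image_iff le_less)+

lemma circle_proper_closed_subset_in_arc: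
  assumes "closed K" "K \<subseteq> circle" "K \<noteq> circle"
  obtains A B where "arc_set A" "arc_set B" "A \<subset> B" "B \<subseteq> circle" "K \<subseteq> A"
proof -
  obtain \<theta> where "cis \<theta> \<notin> K"
    using assms(2,3) circle_eq_cis by blast
  then obtain \<delta> where \<delta>: "0 < \<delta>" "\<delta> \<le> 1" "cis ` {\<theta>-\<delta>..\<theta>+\<delta>} \<subseteq> - K"
    using closed_arc_in_open assms(1) by blast
  have pi: "pi > 3" by (rule pi_gt3)
  define A where "A = cis ` {\<theta>+\<delta>..\<theta>-\<delta>+2*pi}"
  define B where "B = cis ` {\<theta>+\<delta>/2..\<theta>-\<delta>/2+2*pi}"
  have A: "A = circle - cis ` {\<theta>-\<delta><..<\<theta>+\<delta>}"
    unfolding A_def by (rule circle_minus_open_arc[symmetric]) (use \<delta> pi in auto)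
  have "cis (\<theta> + 3*\<delta>/4) \<in> cis ` {\<theta>-\<delta><..<\<theta>+\<delta>}"
    by (rule imageI) (use \<delta> in auto)
  moreover have "cis (\<theta> + 3*\<delta>/4) \<in> B"
    unfolding B_def by (rule imageI) (use \<delta> pi in auto)
  ultimately have "cis (\<theta> + 3*\<delta>/4) \<in> B - A"
    unfolding A by blast
  moreover have "A \<subseteq> B"
    unfolding A_def B_def using \<delta> by (intro image_mono) auto
  moreover have "cis ` {\<theta>-\<delta><..<\<theta>+\<delta>} \<subseteq> - K"
    by (rule order_trans[OF image_mono \<delta>(3)]) auto
  then have "K \<subseteq> A"
    unfolding A using assms(2) by blast
  moreover have "arc_set A" "arc_set B"
    unfolding A_def B_def using \<delta> pi by (auto intro!: arc_set_closed_arc)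
  moreover have "B \<subseteq> circle"
    unfolding B_def by auto
  ultimately show thesis
    using that[of A B] by blast
qed

lemma circle_connected_subset_between_gaps:
  assumes "connected B" "B \<subseteq> circle" "q < \<beta>" "\<beta> < p" "p < q + 2*pi"
    and "cis \<beta> \<in> B" "cis p \<notin> B" "cis q \<notin> B"
  shows "B \<subseteq> cis ` {q<..<p}"
proof -
  define C1 where "C1 = cis ` {p..q + 2*pi}"
  define C2 where "C2 = cis ` {q + 2*pi..p + 2*pi}"
  have U1: "circle - C1 = cis ` {q<..<p}"
    unfolding C1_def using assms(3-5) by (intro circle_minus_closed_arc) auto
  have U2: "circle - C2 = cis ` {p<..<q + 2*pi}"
    unfolding C2_def using assms(3-5) by (intro circle_minus_closed_arc) auto
  have "cis ` {p<..<q + 2*pi} \<subseteq> C1"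
    unfolding C1_def by (intro image_mono) auto
  then have disjoint: "- C1 \<inter> - C2 \<inter> B = {}"
    using U1 U2 assms(2) by blast
  have cover: "B \<subseteq> - C1 \<union> - C2"
  proof
    fix z assume z: "z \<in> B"
    show "z \<in> - C1 \<union> - C2"
    proof (cases "z \<in> C1")
      case True
      then obtain y where y: "p \<le> y" "y \<le> q + 2*pi" "z = cis y"
        unfolding C1_def by auto
      have "y \<noteq> p"
        using y(3) z assms(7) by blast
      moreover have "y \<noteq> q + 2*pi"
        using y(3) z assms(8) by (auto simp: cis_mult[symmetric])
      ultimately have "z \<in> cis ` {p<..<q + 2*pi}"
        using y by auto
      then show ?thesis
        using U2 by blast
    qed simp
  qed
  have "open (- C1)" "open (- C2)"
    unfolding C1_def C2_def by (intro open_Compl compact_imp_closed compact_closed_arc)+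
  moreover have "cis \<beta> \<in> - C1"
    using U1 assms(3,4) by auto
  ultimately have "- C2 \<inter> B = {}"
    using connectedD[OF assms(1) _ _ disjoint cover] assms(6) by blast
  then show ?thesis
    using cover U1 assms(2) by blast
qed

lemma circle_continuum_psubset_interior:
  assumes "continuum A" "connected B" "B \<subseteq> circle" "A \<subset> B"
  obtains W where "openin (top_of_set circle) W" "W \<noteq> {}" "W \<subseteq> B - A"
proof -
  note result = that
  obtain b where b: "b \<in> B" "b \<notin> A"
    using assms(4) by blast
  define \<beta> where "\<beta> = Arg b"
  have b\<beta>: "cis \<beta> = b"
    unfolding \<beta>_def using b(1) assms(3) by (intro cis_Arg_circle) blast
  have "open (- A)"
    using assms(1) by (simp add: continuum_def compact_imp_closed open_Compl)
  then obtain \<delta> where \<delta>: "0 < \<delta>" "\<delta> \<le> 1" "cis ` {\<beta>-\<delta>..\<beta>+\<delta>} \<subseteq> - A"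
    using b(2) b\<beta> closed_arc_in_open[of "- A" \<beta>] by blast
  have pi: "pi > 3" by (rule pi_gt3)
  have arc_in: "cis ` {l<..<u} \<subseteq> - A" if "\<beta> - \<delta> \<le> l" "u \<le> \<beta> + \<delta>" for l u
    by (rule order_trans[OF image_mono \<delta>(3)]) (use that in auto)
  have good: thesis if "l < u" "u \<le> \<beta> + \<delta>" "\<beta> - \<delta> \<le> l" "cis ` {l<..<u} \<subseteq> B" for l u
  proof (rule result)
    show "openin (top_of_set circle) (cis ` {l<..<u})"
      using that(1-3) \<delta> pi by (intro openin_circle_open_arc) auto
    show "cis ` {l<..<u} \<noteq> {}"
      using that(1) by simp
    show "cis ` {l<..<u} \<subseteq> B - A"
      using that(4) arc_in[OF that(3,2)] by blast
  qed
  show thesis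
  proof (cases "cis ` {\<beta><..<\<beta>+\<delta>} \<subseteq> B")
    case True
    then show thesis using \<delta> by (intro good) auto
  next
    case not_right: False
    show thesis
    proof (cases "cis ` {\<beta>-\<delta><..<\<beta>} \<subseteq> B")
      case True
      then show thesis using \<delta> by (intro good) auto
    next
      case False
      then obtain q where q: "\<beta> - \<delta> < q" "q < \<beta>" "cis q \<notin> B"
        by (auto simp: image_subset_iff)
      obtain p where p: "\<beta> < p" "p < \<beta> + \<delta>" "cis p \<notin> B"
        using not_right by (auto simp: image_subset_iff)
      have "B \<subseteq> cis ` {q<..<p}"
        using assms(2,3) q p b(1) b\<beta> \<delta> pi by (intro circle_connected_subset_between_gaps) auto
      also have "\<dots> \<subseteq> - A"
        using p q by (intro arc_in) auto
      finally have "A = {}"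
        using assms(4) by blast
      then show thesis
        using assms(1) by (simp add: continuum_def)
    qed
  qed
qed

lemma circle_small_complement_continuum:
  assumes "z \<in> circle" "0 < r"
  obtains K where "continuum K" "K \<subseteq> circle" "K \<noteq> circle" "circle - K \<subseteq> ball z r"
proof -
  define \<theta> where "\<theta> = Arg z"
  have z: "cis \<theta> = z"
    unfolding \<theta>_def using assms(1) by (rule cis_Arg_circle)
  then obtain \<delta> where \<delta>: "0 < \<delta>" "\<delta> \<le> 1" "cis ` {\<theta>-\<delta>..\<theta>+\<delta>} \<subseteq> ball z r"
    using closed_arc_in_open[of "ball z r" \<theta>] assms(2) by auto
  have pi: "pi > 3" by (rule pi_gt3)
  define K where "K = cis ` {\<theta>+\<delta>..\<theta>-\<delta>+2*pi}"
  have K: "circle - K = cis ` {\<theta>-\<delta><..<\<theta>+\<delta>}"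
    unfolding K_def using \<delta> pi circle_minus_closed_arc[of "\<theta>-\<delta>" "\<theta>+\<delta>"] by simp
  show thesis
  proof (rule that)
    show "continuum K"
      unfolding K_def using \<delta> pi by (intro continuum_closed_arc) simp
    show "K \<subseteq> circle"
      unfolding K_def by (rule image_subsetI) simp
    have "z \<in> circle - K"
      unfolding K z[symmetric] using \<delta>(1) by (intro imageI) simp
    then show "K \<noteq> circle"
      by blast
    show "circle - K \<subseteq> ball z r"
      unfolding K by (rule order_trans[OF image_mono \<delta>(3)]) auto
  qed
qed

section \<open>Injective points and irreducibility\<close>

definition inj_points :: "'a set \<Rightarrow> ('a \<Rightarrow> 'b) \<Rightarrow> 'a set" where
  "inj_points S g = {x \<in> S. {y \<in> S. g y = g x} = {x}}"

lemma almost_injective_iff_dense_inj_points: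
  "almost_injective S g \<longleftrightarrow> S \<subseteq> closure (inj_points S g)"
  by (simp add: almost_injective_def inj_points_def)

lemma inj_points_subset: "inj_points S g \<subseteq> S"
  by (auto simp: inj_points_def)

lemma inj_pointsD: "t \<in> inj_points S g \<Longrightarrow> y \<in> S \<Longrightarrow> g y = g t \<Longrightarrow> y = t"
  by (auto simp: inj_points_def)

lemma almost_injective_obtain_inj_point:
  assumes "almost_injective S g" "openin (top_of_set S) W" "W \<noteq> {}"
  obtains t where "t \<in> W" "t \<in> inj_points S g"
proof -
  obtain T where T: "open T" "W = S \<inter> T"
    using assms(2) openin_open by blast
  have "S \<subseteq> closure (inj_points S g)"
    using assms(1) by (simp add: almost_injective_iff_dense_inj_points)
  then have "T \<inter> closure (inj_points S g) \<noteq> {}"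
    using assms(3) T(2) by blast
  then have "T \<inter> inj_points S g \<noteq> {}"
    by (simp add: open_Int_closure_eq_empty[OF T(1)])
  then obtain t where t: "t \<in> T" "t \<in> inj_points S g"
    by blast
  then have "t \<in> W"
    using T(2) inj_points_subset[of S g] by blast
  then show thesis
    using t(2) by (rule that)
qed

lemma almost_injective_image_psubset:
  assumes "almost_injective S g" "A \<subseteq> B" "B \<subseteq> S"
    and "openin (top_of_set S) W" "W \<noteq> {}" "W \<subseteq> B - A"
  shows "g ` A \<subset> g ` B"
proof -
  obtain t where t: "t \<in> W" "t \<in> inj_points S g"
    by (rule almost_injective_obtain_inj_point[OF assms(1,4,5)])
  have "g t \<notin> g ` A"
  proof
    assume "g t \<in> g ` A"
    then obtain a where a: "a \<in> A" "g t = g a" by (rule imageE)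
    have "a \<in> S"
      using a(1) assms(2,3) by blast
    then have "a = t"
      using a(2)[symmetric] by (rule inj_pointsD[OF t(2)])
    then show False
      using a(1) t(1) assms(6) by blast
  qed
  moreover have "g t \<in> g ` B"
    using t(1) assms(6) by blast
  moreover have "g ` A \<subseteq> g ` B"
    using assms(2) by (rule image_mono)
  ultimately show ?thesis
    by blast
qed

lemma strongly_irreducibleD:
  "strongly_irreducible S g \<Longrightarrow> closedin (top_of_set S) A \<Longrightarrow> A \<subset> S \<Longrightarrow> g ` A \<subset> g ` S"
  by (simp add: strongly_irreducible_def)

lemma irreducible_mapD:
  "irreducible_map S g \<Longrightarrow> K \<subseteq> S \<Longrightarrow> continuum K \<Longrightarrow> K \<noteq> S \<Longrightarrow> g ` K \<subset> g ` S"
  by (simp add: irreducible_map_def)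

lemma arcwise_increasingD:
  "arcwise_increasing S g \<Longrightarrow> B \<subseteq> S \<Longrightarrow> arc_set A \<Longrightarrow> arc_set B \<Longrightarrow> A \<subset> B \<Longrightarrow> g ` A \<subset> g ` B"
  by (simp add: arcwise_increasing_def)

lemma almost_injective_imp_strongly_irreducible:
  assumes "almost_injective S g"
  shows "strongly_irreducible S g"
  unfolding strongly_irreducible_def
proof (intro allI impI)
  fix A assume A: "closedin (top_of_set S) A \<and> A \<subset> S"
  have "openin (top_of_set S) (S - A)"
    using A by (simp add: closedin_def)
  moreover have "S - A \<noteq> {}"
    using A by blast
  ultimately show "g ` A \<subset> g ` S"
    using A by (intro almost_injective_image_psubset[OF assms, of A S "S - A"]) auto
qed

lemma strongly_irreducible_imp_irreducible:
  assumes "strongly_irreducible S g"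
  shows "irreducible_map S g"
  unfolding irreducible_map_def
proof (intro allI impI)
  fix K assume K: "K \<subseteq> S \<and> continuum K \<and> K \<noteq> S"
  then have "closed K"
    by (simp add: compact_imp_closed continuum_def)
  then have "closedin (top_of_set S) K"
    using K by (simp add: closed_subset)
  moreover have "K \<subset> S"
    using K by blast
  ultimately show "g ` K \<subset> g ` S"
    by (rule strongly_irreducibleD[OF assms])
qed

lemma arc_set_imp_continuum:
  assumes "arc_set A"
  shows "continuum A"
proof -
  have h: "A homeomorphic {0..1::real}"
    using assms unfolding arc_set_def .
  have "A \<noteq> {}"
    using h homeomorphic_empty(1) by fastforce
  then show ?thesis
    unfolding continuum_def
    using homeomorphic_compactness[OF h] homeomorphic_connectedness[OF h] by simp
qed

lemma hereditarily_irreducible_imp_arcwise_increasing: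
  "hereditarily_irreducible S g \<Longrightarrow> arcwise_increasing S g"
  by (simp add: hereditarily_irreducible_def arcwise_increasing_def arc_set_imp_continuum)

lemma arcwise_increasing_imp_irreducible:
  assumes "arcwise_increasing circle g"
  shows "irreducible_map circle g"
  unfolding irreducible_map_def
proof (intro allI impI)
  fix K assume K: "K \<subseteq> circle \<and> continuum K \<and> K \<noteq> circle"
  then have "closed K"
    by (simp add: compact_imp_closed continuum_def)
  then obtain A B where AB: "arc_set A" "arc_set B" "A \<subset> B" "B \<subseteq> circle" "K \<subseteq> A"
    using circle_proper_closed_subset_in_arc[of K] K by blast
  have "g ` K \<subseteq> g ` A"
    using AB(5) by (rule image_mono)
  also have "g ` A \<subset> g ` B"
    using AB(4,1-3) by (rule arcwise_increasingD[OF assms])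
  also have "g ` B \<subseteq> g ` circle"
    using AB(4) by (rule image_mono)
  finally show "g ` K \<subset> g ` circle" .
qed

lemma almost_injective_imp_hereditarily_irreducible:
  assumes "almost_injective circle g"
  shows "hereditarily_irreducible circle g"
  unfolding hereditarily_irreducible_def
proof (intro allI impI)
  fix A B assume H: "B \<subseteq> circle \<and> continuum A \<and> continuum B \<and> A \<subset> B"
  then have "continuum A" "connected B" "B \<subseteq> circle" "A \<subset> B"
    by (simp_all add: continuum_def)
  then obtain W where W: "openin (top_of_set circle) W" "W \<noteq> {}" "W \<subseteq> B - A"
    by (rule circle_continuum_psubset_interior)
  show "g ` A \<subset> g ` B"
    using H by (intro almost_injective_image_psubset[OF assms _ _ W]) auto
qed

section \<open>Irreducible maps are almost injective\<close>

definition twin_points :: "'a::metric_space set \<Rightarrow> ('a \<Rightarrow> 'b) \<Rightarrow> real \<Rightarrow> 'a set" where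
  "twin_points S g e = {x \<in> S. \<exists>y \<in> S. g y = g x \<and> e \<le> dist x y}"

lemma compact_twin_points:
  fixes g :: "'a::metric_space \<Rightarrow> 'b::metric_space"
  assumes "compact S" "continuous_on S g"
  shows "compact (twin_points S g e)"
proof -
  define M where "M = {p \<in> S \<times> S. g (snd p) = g (fst p) \<and> e \<le> dist (fst p) (snd p)}"
  have SS: "compact (S \<times> S)" "closed (S \<times> S)"
    using assms(1) by (simp_all add: compact_Times compact_imp_closed)
  have cont: "continuous_on (S \<times> S) (\<lambda>p. dist (g (snd p)) (g (fst p)))"
    by (intro continuous_intros continuous_on_compose2[OF assms(2)]) auto
  have "closed {p \<in> S \<times> S. dist (g (snd p)) (g (fst p)) = 0}"
    by (rule continuous_closed_preimage_constant[OF cont SS(2)])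
  moreover have "closed {p \<in> S \<times> S. e \<le> dist (fst p) (snd p)}"
    by (intro continuous_on_closed_Collect_le continuous_intros SS(2))
  moreover have "M = {p \<in> S \<times> S. dist (g (snd p)) (g (fst p)) = 0}
      \<inter> {p \<in> S \<times> S. e \<le> dist (fst p) (snd p)}"
    unfolding M_def by auto
  ultimately have "closed M"
    by (simp only: closed_Int)
  moreover have "M \<inter> (S \<times> S) = M"
    unfolding M_def by blast
  ultimately have "compact M"
    using closed_Int_compact[OF _ SS(1), of M] by simp
  then have "compact (fst ` M)"
    by (intro compact_continuous_image continuous_intros)
  moreover have "fst ` M = twin_points S g e"
  proof
    show "fst ` M \<subseteq> twin_points S g e"
      unfolding M_def twin_points_def by (rule image_subsetI) auto
    show "twin_points S g e \<subseteq> fst ` M"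
    proof
      fix x assume "x \<in> twin_points S g e"
      then obtain y where "x \<in> S" "y \<in> S" "g y = g x" "e \<le> dist x y"
        unfolding twin_points_def by blast
      then have "(x, y) \<in> M"
        unfolding M_def by simp
      then show "x \<in> fst ` M"
        by (rule image_eqI[rotated]) simp
    qed
  qed
  ultimately show ?thesis
    by simp
qed

lemma Diff_twin_points_subset_inj_points:
  "S - (\<Union>n. twin_points S g (1 / Suc n)) \<subseteq> inj_points S g"
proof
  fix x assume x: "x \<in> S - (\<Union>n. twin_points S g (1 / Suc n))"
  have "y = x" if "y \<in> S" "g y = g x" for y
  proof (rule ccontr)
    assume "y \<noteq> x"
    then have "0 < dist x y"
      by simp
    then obtain n where "1 / Suc n < dist x y"
      by (rule nat_approx_posE)
    then have "x \<in> twin_points S g (1 / Suc n)"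
      using x that unfolding twin_points_def by (auto intro!: bexI[of _ y])
    then show False
      using x by blast
  qed
  then show "x \<in> inj_points S g"
    using x unfolding inj_points_def by auto
qed

lemma dense_complement_twin_points:
  assumes small: "\<And>z r. z \<in> S \<Longrightarrow> 0 < r \<Longrightarrow> \<exists>K\<subseteq>S. S - K \<subseteq> ball z r \<and> g ` K \<subset> g ` S"
    and "0 < e"
  shows "S \<subseteq> closure (S - twin_points S g e)"
proof
  fix z assume z: "z \<in> S"
  show "z \<in> closure (S - twin_points S g e)"
    unfolding closure_approachable
  proof (intro allI impI)
    fix d :: real assume "0 < d"
    define r where "r = min d (e / 2)"
    have r: "0 < r" "r \<le> d" "2 * r \<le> e"
      using \<open>0 < d\<close> \<open>0 < e\<close> by (auto simp: r_def)
    obtain K where K: "K \<subseteq> S" "S - K \<subseteq> ball z r" "g ` K \<subset> g ` S"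
      using small[OF z r(1)] by blast
    obtain y where "y \<in> g ` S" "y \<notin> g ` K"
      using psubset_imp_ex_mem[OF K(3)] by blast
    then obtain s where s: "s \<in> S" "g s \<notin> g ` K"
      by blast
    have near: "dist u z < r" if "u \<in> S" "g u = g s" for u
    proof -
      have "u \<notin> K"
      proof
        assume "u \<in> K"
        then have "g u \<in> g ` K"
          by (rule imageI)
        then show False
          using s(2) that(2) by simp
      qed
      then have "u \<in> ball z r"
        using K(2) that(1) by blast
      then show ?thesis
        by (simp add: dist_commute)
    qed
    have "s \<notin> twin_points S g e"
    proof
      assume "s \<in> twin_points S g e"
      then obtain u where u: "u \<in> S" "g u = g s" "e \<le> dist s u"
        unfolding twin_points_def by blast
      have "dist s u \<le> dist s z + dist u z"
        using dist_triangle3[of s u z] by (simp add: dist_commute)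
      then show False
        using near[OF u(1,2)] near[OF s(1) refl] u(3) r(3) by linarith
    qed
    show "\<exists>y \<in> S - twin_points S g e. dist y z < d"
    proof (rule bexI[of _ s])
      show "dist s z < d"
        using near[OF s(1) refl] r(2) by linarith
      show "s \<in> S - twin_points S g e"
        using s(1) \<open>s \<notin> twin_points S g e\<close> by blast
    qed
  qed
qed

lemma small_complements_imp_almost_injective:
  fixes g :: "'a::{real_normed_vector,heine_borel} \<Rightarrow> 'b::metric_space"
  assumes "compact S" "continuous_on S g"
    and small: "\<And>z r. z \<in> S \<Longrightarrow> 0 < r \<Longrightarrow> \<exists>K\<subseteq>S. S - K \<subseteq> ball z r \<and> g ` K \<subset> g ` S"
  shows "almost_injective S g"
proof -
  define U where "U n = S - twin_points S g (1 / Suc n)" for n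
  have dense: "S \<subseteq> closure (\<Inter> (range U))"
  proof (rule Baire)
    show "closed S"
      using assms(1) by (rule compact_imp_closed)
    fix T assume "T \<in> range U"
    then obtain n where T: "T = S - twin_points S g (1 / Suc n)"
      unfolding U_def by blast
    have "closed (twin_points S g (1 / Suc n))"
      using compact_twin_points[OF assms(1,2)] by (rule compact_imp_closed)
    then have "openin (top_of_set S) (S \<inter> - twin_points S g (1 / Suc n))"
      by (intro openin_open_Int open_Compl)
    moreover have "S \<subseteq> closure T"
      unfolding T
    proof (rule dense_complement_twin_points)
      show "0 < 1 / real (Suc n)"
        by (intro divide_pos_pos) simp_all
    qed (rule small)
    ultimately show "openin (top_of_set S) T \<and> S \<subseteq> closure T"
      unfolding T by (simp add: Diff_eq)
  qed simp
  have "\<Inter> (range U) \<subseteq> inj_points S g"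
    using Diff_twin_points_subset_inj_points[of S g] unfolding U_def by blast
  then have "closure (\<Inter> (range U)) \<subseteq> closure (inj_points S g)"
    by (rule closure_mono)
  with dense show ?thesis
    unfolding almost_injective_iff_dense_inj_points by (rule order_trans)
qed

lemma irreducible_imp_almost_injective:
  fixes g :: "complex \<Rightarrow> 'b::metric_space"
  assumes "continuous_on circle g" "irreducible_map circle g"
  shows "almost_injective circle g"
proof (rule small_complements_imp_almost_injective[OF compact_circle assms(1)])
  fix z r assume "z \<in> circle" "0 < (r::real)"
  then obtain K where K: "continuum K" "K \<subseteq> circle" "K \<noteq> circle" "circle - K \<subseteq> ball z r"
    by (rule circle_small_complement_continuum)
  then show "\<exists>K\<subseteq>circle. circle - K \<subseteq> ball z r \<and> g ` K \<subset> g ` circle"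
    using irreducible_mapD[OF assms(2) K(2,1,3)] by blast
qed

section \<open>Zero-dimensional subsets of the circle\<close>

lemma zero_dimensional_connected_subset:
  assumes "zero_dimensional P" "connected C" "C \<subseteq> P" "x \<in> C" "y \<in> C"
  shows "x = y"
proof (rule ccontr)
  assume "x \<noteq> y"
  then have "open (ball x (dist x y)) \<and> x \<in> ball x (dist x y)"
    by simp
  then obtain V where V: "openin (top_of_set P) V" "closedin (top_of_set P) V" "x \<in> V"
      "V \<subseteq> ball x (dist x y)"
    using assms(1,3,4) unfolding zero_dimensional_def by blast
  obtain U where U: "open U" "V = P \<inter> U"
    using V(1) openin_open by blast
  obtain F where F: "closed F" "V = P \<inter> F"
    using V(2) closedin_closed by blast
  have "U \<inter> - F \<inter> C = {}" "C \<subseteq> U \<union> - F"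
    using U(2) F(2) assms(3) by blast+
  then have "U \<inter> C = {} \<or> - F \<inter> C = {}"
    using connectedD[OF assms(2) U(1)] F(1) by blast
  moreover have "y \<notin> V"
  proof
    assume "y \<in> V"
    then have "dist x y < dist x y"
      using V(4) by auto
    then show False
      by simp
  qed
  ultimately show False
    using U(2) F(2) V(3) assms(3-5) by blast
qed

lemma circle_zero_dimensional_imp_empty_interior:
  assumes "zero_dimensional P" "openin (top_of_set circle) W" "W \<subseteq> P"
  shows "W = {}"
proof (rule ccontr)
  assume "W \<noteq> {}"
  then obtain w where w: "w \<in> W"
    by blast
  obtain T where T: "open T" "W = circle \<inter> T"
    using assms(2) openin_open by blast
  define \<theta> where "\<theta> = Arg w"
  have "cis \<theta> \<in> T"
    unfolding \<theta>_def using w T(2) cis_Arg_circle by auto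
  then obtain \<delta> where \<delta>: "0 < \<delta>" "\<delta> \<le> 1" "cis ` {\<theta>-\<delta>..\<theta>+\<delta>} \<subseteq> T"
    using closed_arc_in_open[OF T(1)] by blast
  have "cis ` {\<theta>-\<delta>..\<theta>+\<delta>} \<subseteq> circle \<inter> T"
    using \<delta>(3) by (auto simp: image_subset_iff)
  then have "cis ` {\<theta>-\<delta>..\<theta>+\<delta>} \<subseteq> P"
    using T(2) assms(3) by blast
  moreover have "connected (cis ` {\<theta>-\<delta>..\<theta>+\<delta>})"
    using continuum_closed_arc[of "\<theta>-\<delta>" "\<theta>+\<delta>"] \<delta>(1) by (simp add: continuum_def)
  ultimately have "cis \<theta> = cis (\<theta> + \<delta>)"
    using \<delta>(1) by (intro zero_dimensional_connected_subset[OF assms(1)]) auto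
  then have "\<theta> = \<theta> + \<delta>"
    using \<delta> pi_gt3 by (intro cis_eq_imp_eq) auto
  then show False
    using \<delta>(1) by simp
qed

lemma circle_arc_between_gaps_clopen:
  assumes "P \<subseteq> circle" "q < p" "p \<le> q + 2*pi" "cis p \<notin> P" "cis q \<notin> P"
  shows "openin (top_of_set P) (P \<inter> cis ` {q<..<p})" "closedin (top_of_set P) (P \<inter> cis ` {q<..<p})"
proof -
  obtain T where T: "open T" "cis ` {q<..<p} = circle \<inter> T"
    using openin_circle_open_arc[OF assms(2,3)] openin_open by blast
  have "P \<inter> cis ` {q<..<p} = P \<inter> T"
    unfolding T(2) using assms(1) by blast
  then show "openin (top_of_set P) (P \<inter> cis ` {q<..<p})"
    using T(1) by (simp add: openin_open_Int)
  have "P \<inter> cis ` {q<..<p} = P \<inter> cis ` {q..p}"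
  proof
    show "P \<inter> cis ` {q<..<p} \<subseteq> P \<inter> cis ` {q..p}"
      by (intro Int_mono image_mono) auto
    show "P \<inter> cis ` {q..p} \<subseteq> P \<inter> cis ` {q<..<p}"
    proof
      fix x assume x: "x \<in> P \<inter> cis ` {q..p}"
      then obtain \<phi> where \<phi>: "q \<le> \<phi>" "\<phi> \<le> p" "x = cis \<phi>"
        by auto
      have "\<phi> \<noteq> q" "\<phi> \<noteq> p"
        using x \<phi>(3) assms(4,5) by auto
      then show "x \<in> P \<inter> cis ` {q<..<p}"
        using x \<phi> by auto
    qed
  qed
  moreover have "closed (cis ` {q..p})"
    by (rule compact_imp_closed[OF compact_closed_arc])
  ultimately show "closedin (top_of_set P) (P \<inter> cis ` {q<..<p})"
    by (simp add: closedin_closed_Int)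
qed

lemma circle_empty_interior_imp_zero_dimensional:
  assumes "P \<subseteq> circle" "\<And>W. openin (top_of_set circle) W \<Longrightarrow> W \<subseteq> P \<Longrightarrow> W = {}"
  shows "zero_dimensional P"
  unfolding zero_dimensional_def
proof (intro ballI allI impI)
  fix t U assume t: "t \<in> P" and U: "open U \<and> t \<in> U"
  define \<theta> where "\<theta> = Arg t"
  have t\<theta>: "cis \<theta> = t"
    unfolding \<theta>_def using t assms(1) by (intro cis_Arg_circle) blast
  then obtain \<delta> where \<delta>: "0 < \<delta>" "\<delta> \<le> 1" "cis ` {\<theta>-\<delta>..\<theta>+\<delta>} \<subseteq> U"
    using closed_arc_in_open[of U \<theta>] U by blast
  have pi: "pi > 3" by (rule pi_gt3)
  have gap: "\<not> cis ` {l<..<u} \<subseteq> P" if "l < u" "u \<le> l + 2*pi" for l u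
  proof
    assume "cis ` {l<..<u} \<subseteq> P"
    then have "cis ` {l<..<u} = {}"
      using assms(2) openin_circle_open_arc[OF that] by blast
    then show False
      using that(1) by simp
  qed
  obtain p where p: "\<theta> < p" "p < \<theta> + \<delta>" "cis p \<notin> P"
    using gap[of \<theta> "\<theta> + \<delta>"] \<delta> pi by (auto simp: image_subset_iff)
  obtain q where q: "\<theta> - \<delta> < q" "q < \<theta>" "cis q \<notin> P"
    using gap[of "\<theta> - \<delta>" \<theta>] \<delta> pi by (auto simp: image_subset_iff)
  define V where "V = P \<inter> cis ` {q<..<p}"
  have open_V: "openin (top_of_set P) V" and closed_V: "closedin (top_of_set P) V"
    using circle_arc_between_gaps_clopen[OF assms(1), of q p] p q \<delta> pi unfolding V_def by auto
  have "t \<in> V"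
    unfolding V_def using t t\<theta> p q by auto
  moreover have "V \<subseteq> U"
  proof -
    have "cis ` {q<..<p} \<subseteq> cis ` {\<theta>-\<delta>..\<theta>+\<delta>}"
      using p q by (intro image_mono) auto
    then show ?thesis
      unfolding V_def using \<delta>(3) by blast
  qed
  ultimately show "\<exists>V. openin (top_of_set P) V \<and> closedin (top_of_set P) V \<and> t \<in> V \<and> V \<subseteq> U"
    using open_V closed_V by blast
qed

lemma empty_interior_imp_dense_complement:
  assumes "\<And>W. openin (top_of_set S) W \<Longrightarrow> W \<subseteq> P \<Longrightarrow> W = {}"
  shows "S \<subseteq> closure (S - P)"
proof
  fix z assume z: "z \<in> S"
  define W where "W = S \<inter> - closure (S - P)"
  have "openin (top_of_set S) W"
    unfolding W_def by (intro openin_open_Int open_Compl closed_closure)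
  moreover have "W \<subseteq> P"
    unfolding W_def using closure_subset by blast
  ultimately have "W = {}"
    by (rule assms)
  then show "z \<in> closure (S - P)"
    using z unfolding W_def by blast
qed

section \<open>Edges\<close>

lemma edge_union_subset: "edge_union X \<subseteq> X"
  unfolding edge_union_def edge_def using openin_subset by fastforce

lemma Gr_preimage_empty_interior:
  fixes g :: "'a::metric_space \<Rightarrow> 'b::metric_space"
  assumes "compact S" "continuous_on S g" "g ` S = X" "X \<subseteq> closure (edge_union X)"
    and "strongly_irreducible S g"
    and W: "openin (top_of_set S) W" "W \<subseteq> {s \<in> S. g s \<in> Gr X}"
  shows "W = {}"
proof (rule ccontr)
  assume "W \<noteq> {}"
  have closed_rest: "closedin (top_of_set S) (S - W)"
    using closedin_diff[OF closedin_topspace W(1)] by simp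
  moreover have "S - W \<subset> S"
    using \<open>W \<noteq> {}\<close> openin_subset[OF W(1)] by auto
  ultimately have "g ` (S - W) \<subset> X"
    using strongly_irreducibleD[OF assms(5)] assms(3) by blast
  then obtain x where x: "x \<in> X" "x \<notin> g ` (S - W)"
    by blast
  have "compact (S - W)"
    using closed_rest by (rule closedin_compact[OF assms(1)])
  then have "compact (g ` (S - W))"
    using continuous_on_subset[OF assms(2) Diff_subset] by (rule compact_continuous_image[rotated])
  then have "open (- g ` (S - W))"
    by (intro open_Compl compact_imp_closed)
  moreover have "x \<in> closure (edge_union X)"
    using assms(4) x(1) by blast
  ultimately have "- g ` (S - W) \<inter> edge_union X \<noteq> {}"
    using x(2) open_Int_closure_eq_empty by blast
  then obtain y where y: "y \<in> edge_union X" "y \<notin> g ` (S - W)"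
    by blast
  then obtain s where s: "s \<in> S" "g s = y"
    using edge_union_subset assms(3) by blast
  then have "s \<in> W"
    using y(2) by blast
  then show False
    using W(2) s(2) y(1) unfolding Gr_def by blast
qed

lemma edgewise_eulerian_imp_almost_injective:
  assumes "g ` S = X" "edgewise_eulerian S X g"
    and "\<And>W. openin (top_of_set S) W \<Longrightarrow> W \<subseteq> {s \<in> S. g s \<in> Gr X} \<Longrightarrow> W = {}"
  shows "almost_injective S g"
proof -
  have "S - {s \<in> S. g s \<in> Gr X} \<subseteq> inj_points S g"
  proof
    fix s assume s: "s \<in> S - {s \<in> S. g s \<in> Gr X}"
    then have "g s \<in> edge_union X"
      using assms(1) unfolding Gr_def by blast
    then obtain t where t: "{s' \<in> S. g s' = g s} = {t}"
      using assms(2) unfolding edgewise_eulerian_def by blast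
    moreover have "s \<in> {s' \<in> S. g s' = g s}"
      using s by simp
    ultimately have "t = s"
      by simp
    then show "s \<in> inj_points S g"
      using s t unfolding inj_points_def by blast
  qed
  then have "closure (S - {s \<in> S. g s \<in> Gr X}) \<subseteq> closure (inj_points S g)"
    by (rule closure_mono)
  with empty_interior_imp_dense_complement[OF assms(3)] show ?thesis
    unfolding almost_injective_iff_dense_inj_points by (rule order_trans)
qed

lemma openin_edge_preimage:
  assumes "edge X E" "continuous_on S g" "g ` S = X"
  shows "openin (top_of_set S) {s \<in> S. g s \<in> E}"
proof -
  have "openin (top_of_set (g ` S)) E"
    using assms(1,3) by (simp add: edge_def)
  then have "openin (top_of_set S) (S \<inter> g -` E)"
    using assms(2) continuous_on_open by blast
  moreover have "S \<inter> g -` E = {s \<in> S. g s \<in> E}"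
    by blast
  ultimately show ?thesis
    by simp
qed

lemma edge_real_coordinate:
  assumes "edge X E"
  obtains h :: "'a::metric_space \<Rightarrow> real" where "continuous_on E h" "inj_on h E"
proof -
  obtain h k where hk: "homeomorphism E {0<..<1::real} h k"
    using assms unfolding edge_def homeomorphic_def by blast
  then have "inj_on h E"
    by (metis homeomorphism_apply1 inj_onI)
  with hk show thesis
    by (intro that[of h]) (simp_all add: homeomorphism_cont1)
qed

lemma edge_preimage_coordinate:
  fixes g :: "'b::topological_space \<Rightarrow> 'a::metric_space"
  assumes "edge X E" "continuous_on S g"
  obtains F :: "'b \<Rightarrow> real" where "continuous_on {s \<in> S. g s \<in> E} F"
    "\<And>s s'. g s \<in> E \<Longrightarrow> g s' \<in> E \<Longrightarrow> F s = F s' \<longleftrightarrow> g s = g s'"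
proof -
  obtain h :: "'a \<Rightarrow> real" where h: "continuous_on E h" "inj_on h E"
    by (rule edge_real_coordinate[OF assms(1)])
  have "continuous_on {s \<in> S. g s \<in> E} (\<lambda>s. h (g s))"
    using continuous_on_subset[OF assms(2), of "{s \<in> S. g s \<in> E}"]
    by (rule continuous_on_compose2[OF h(1)]) auto
  moreover have "h (g s) = h (g s') \<longleftrightarrow> g s = g s'" if "g s \<in> E" "g s' \<in> E" for s s'
    using h(2) that by (auto dest: inj_onD)
  ultimately show thesis
    by (rule that)
qed

lemma closed_segment_subset_image_connected:
  fixes F :: "'a::topological_space \<Rightarrow> real"
  assumes "continuous_on Q F" "connected C" "C \<subseteq> Q" "a \<in> C" "b \<in> C"
  shows "closed_segment (F a) (F b) \<subseteq> F ` C"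
proof -
  have "connected (F ` C)"
    using continuous_on_subset[OF assms(1,3)] assms(2) by (rule connected_continuous_image)
  then have "convex (F ` C)"
    by (simp add: is_interval_connected_1[symmetric] is_interval_convex_1)
  then show ?thesis
    using assms(4,5) by (intro closed_segment_subset) auto
qed

lemma same_side_common_segment:
  fixes c x y :: real
  assumes "0 < (x - c) * (y - c)"
  obtains m where "m \<noteq> c" "closed_segment c m \<subseteq> closed_segment c x" "closed_segment c m \<subseteq> closed_segment c y"
proof -
  have "(c < x \<and> c < y) \<or> (x < c \<and> y < c)"
    using assms by (auto simp: zero_less_mult_iff)
  then show thesis
  proof (elim disjE conjE)
    assume "c < x" "c < y"
    then show thesis
      by (intro that[of "min x y"]) (simp_all add: closed_segment_eq_real_ivl1)
  next
    assume "x < c" "y < c"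
    then show thesis
      by (intro that[of "max x y"]) (simp_all add: closed_segment_eq_real_ivl)
  qed
qed

lemma two_of_three_same_sign:
  fixes x y z :: real
  assumes "x \<noteq> 0" "y \<noteq> 0" "z \<noteq> 0"
  shows "0 < x * y \<or> 0 < x * z \<or> 0 < y * z"
  using assms by (auto simp: zero_less_mult_iff)

lemma parallel_branches_contradiction:
  fixes F :: "'a::metric_space \<Rightarrow> real"
  assumes ai: "almost_injective S g" and "Q \<subseteq> S" "continuous_on Q F"
    and fibres: "\<And>s s'. s \<in> Q \<Longrightarrow> s' \<in> Q \<Longrightarrow> F s = F s' \<Longrightarrow> g s = g s'"
    and U: "openin (top_of_set S) U" "U \<subseteq> Q"
    and C1: "connected C1" "C1 \<subseteq> insert a1 U" "a1 \<in> C1" "b1 \<in> C1" "a1 \<in> Q"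
    and C2: "connected C2" "C2 \<subseteq> Q - U" "a2 \<in> C2" "b2 \<in> C2"
    and level: "F a2 = F a1" "0 < (F b1 - F a1) * (F b2 - F a1)"
  shows False
proof -
  define c where "c = F a1"
  have C1Q: "C1 \<subseteq> Q" and C2Q: "C2 \<subseteq> Q"
    using C1(2,5) U(2) C2(2) by blast+
  have reach1: "closed_segment c (F b1) \<subseteq> F ` C1"
    unfolding c_def by (rule closed_segment_subset_image_connected[OF assms(3) C1(1) C1Q C1(3,4)])
  have reach2: "closed_segment c (F b2) \<subseteq> F ` C2"
    unfolding c_def level(1)[symmetric]
    by (rule closed_segment_subset_image_connected[OF assms(3) C2(1) C2Q C2(3,4)])
  obtain m where m: "m \<noteq> c" "closed_segment c m \<subseteq> closed_segment c (F b1)"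
      "closed_segment c m \<subseteq> closed_segment c (F b2)"
    using level(2) unfolding c_def by (rule same_side_common_segment)
  \<comment> \<open>F takes every value strictly between c and m on the nonempty open set W; an injective
    point of W therefore has a twin on C2, which lies outside U.\<close>
  define W where "W = U \<inter> F -` open_segment c m"
  have "continuous_on U F"
    using assms(3) U(2) by (rule continuous_on_subset)
  then have "openin (top_of_set U) W"
    unfolding W_def by (rule continuous_openin_preimage_gen) (simp add: open_segment_eq_real_ivl)
  then have "openin (top_of_set S) W"
    using U(1) by (rule openin_trans)
  moreover have "W \<noteq> {}"
  proof -
    have "midpoint c m \<in> closed_segment c (F b1)"
      using m(2) midpoint_in_closed_segment[of c m] by blast
    then have "midpoint c m \<in> F ` C1"
      using reach1 by blast
    then obtain u where u: "u \<in> C1" "F u = midpoint c m"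
      by (metis imageE)
    have "midpoint c m \<noteq> c"
      using m(1) by (simp add: midpoint_def field_simps)
    then have "u \<noteq> a1"
      using u(2) c_def by metis
    then have "u \<in> U"
      using u(1) C1(2) by blast
    moreover have "F u \<in> open_segment c m"
      using u(2) m(1) midpoint_in_open_segment[of c m] by simp
    ultimately show ?thesis
      unfolding W_def by blast
  qed
  ultimately obtain t where t: "t \<in> W" "t \<in> inj_points S g"
    by (rule almost_injective_obtain_inj_point[OF ai])
  have "F t \<in> open_segment c m"
    using t(1) unfolding W_def by blast
  then have "F t \<in> F ` C2"
    using segment_open_subset_closed m(3) reach2 by blast
  then obtain y where y: "y \<in> C2" "F y = F t"
    by (metis imageE)
  have "t \<in> U"
    using t(1) unfolding W_def by blast
  have "y \<in> Q"
    using y(1) C2Q by blast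
  then have "g y = g t"
    using fibres[OF _ _ y(2)] \<open>t \<in> U\<close> U(2) by blast
  then have "y = t"
    using inj_pointsD[OF t(2)] \<open>y \<in> Q\<close> assms(2) by blast
  then show False
    using y(1) C2(2) \<open>t \<in> U\<close> by blast
qed

lemma circle_arc_inj_point:
  assumes "almost_injective circle g" "l < u" "u \<le> l + 2*pi"
  obtains \<phi> where "l < \<phi>" "\<phi> < u" "cis \<phi> \<in> inj_points circle g"
proof -
  have "cis ` {l<..<u} \<noteq> {}"
    using assms(2) by simp
  then obtain t where t: "t \<in> cis ` {l<..<u}" "t \<in> inj_points circle g"
    using almost_injective_obtain_inj_point[OF assms(1) openin_circle_open_arc[OF assms(2,3)]]
    by blast
  then show thesis
    using that by auto
qed

lemma circle_three_branches:
  assumes ai: "almost_injective circle g" and "open T"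
    and t: "t1 \<in> circle \<inter> T" "t2 \<in> circle \<inter> T" "t1 \<noteq> t2"
  obtains U1 U2 C1 C2 C3 b1 b2 b3 where
    "openin (top_of_set circle) U1" "openin (top_of_set circle) U2" "U1 \<union> U2 \<subseteq> T"
    "connected C1" "connected C2" "connected C3" "C1 \<union> C2 \<union> C3 \<subseteq> circle \<inter> T"
    "C1 \<subseteq> insert t1 U1" "C2 \<subseteq> insert t1 U2" "C2 \<inter> U1 = {}" "C3 \<inter> (U1 \<union> U2) = {}"
    "t1 \<in> C1" "t1 \<in> C2" "t2 \<in> C3" "b1 \<in> C1" "b2 \<in> C2" "b3 \<in> C3"
    "{b1, b2, b3} \<subseteq> inj_points circle g"
proof -
  define \<alpha> where "\<alpha> = Arg t1"
  define \<beta> where "\<beta> = Arg t2"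
  have \<alpha>\<beta>: "cis \<alpha> = t1" "cis \<beta> = t2"
    unfolding \<alpha>_def \<beta>_def using t by (simp_all add: cis_Arg_circle)
  then have "cis \<alpha> \<in> T" "cis \<beta> \<in> T" "cis \<alpha> \<noteq> cis \<beta>"
    using t by simp_all
  then obtain \<delta> where \<delta>: "0 < \<delta>" "\<delta> \<le> 1" "cis ` {\<alpha>-\<delta>..\<alpha>+\<delta>} \<subseteq> T" "cis ` {\<beta>-\<delta>..\<beta>+\<delta>} \<subseteq> T"
      "cis ` {\<alpha>-\<delta>..\<alpha>+\<delta>} \<inter> cis ` {\<beta>-\<delta>..\<beta>+\<delta>} = {}"
    by (rule circle_disjoint_arcs_in_open[OF assms(2)])
  have pi: "pi > 3" by (rule pi_gt3)
  obtain \<phi>1 where \<phi>1: "\<alpha> < \<phi>1" "\<phi>1 < \<alpha> + \<delta>" "cis \<phi>1 \<in> inj_points circle g"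
    by (rule circle_arc_inj_point[OF ai, of \<alpha> "\<alpha> + \<delta>"]) (use \<delta> pi in auto)
  obtain \<phi>2 where \<phi>2: "\<alpha> - \<delta> < \<phi>2" "\<phi>2 < \<alpha>" "cis \<phi>2 \<in> inj_points circle g"
    by (rule circle_arc_inj_point[OF ai, of "\<alpha> - \<delta>" \<alpha>]) (use \<delta> pi in auto)
  obtain \<phi>3 where \<phi>3: "\<beta> < \<phi>3" "\<phi>3 < \<beta> + \<delta>" "cis \<phi>3 \<in> inj_points circle g"
    by (rule circle_arc_inj_point[OF ai, of \<beta> "\<beta> + \<delta>"]) (use \<delta> pi in auto)
  define U1 where "U1 = cis ` {\<alpha><..<\<alpha>+\<delta>}"
  define U2 where "U2 = cis ` {\<alpha>-\<delta><..<\<alpha>}"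
  have U: "U1 \<subseteq> cis ` {\<alpha>-\<delta>..\<alpha>+\<delta>}" "U2 \<subseteq> cis ` {\<alpha>-\<delta>..\<alpha>+\<delta>}"
    unfolding U1_def U2_def by (auto intro!: image_mono)
  have C: "cis ` {\<alpha>..\<phi>1} \<subseteq> cis ` {\<alpha>-\<delta>..\<alpha>+\<delta>}" "cis ` {\<phi>2..\<alpha>} \<subseteq> cis ` {\<alpha>-\<delta>..\<alpha>+\<delta>}"
      "cis ` {\<beta>..\<phi>3} \<subseteq> cis ` {\<beta>-\<delta>..\<beta>+\<delta>}"
    using \<phi>1 \<phi>2 \<phi>3 by (auto intro!: image_mono)
  have "cis x \<noteq> cis y" if "\<phi>2 \<le> x" "x \<le> \<alpha>" "\<alpha> < y" "y < \<alpha> + \<delta>" for x y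
  proof
    assume "cis x = cis y"
    then have "x = y"
      by (rule cis_eq_imp_eq) (use that \<phi>2 \<delta> pi in auto)
    then show False
      using that by simp
  qed
  then have "cis ` {\<phi>2..\<alpha>} \<inter> U1 = {}"
    unfolding U1_def by fastforce
  show thesis
  proof (rule that[of U1 U2 "cis ` {\<alpha>..\<phi>1}" "cis ` {\<phi>2..\<alpha>}" "cis ` {\<beta>..\<phi>3}"])
    show "openin (top_of_set circle) U1" "openin (top_of_set circle) U2"
      unfolding U1_def U2_def using \<delta> pi by (auto intro!: openin_circle_open_arc)
    show "U1 \<union> U2 \<subseteq> T"
      using U \<delta>(3) by blast
    show "connected (cis ` {\<alpha>..\<phi>1})" "connected (cis ` {\<phi>2..\<alpha>})" "connected (cis ` {\<beta>..\<phi>3})"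
      using \<phi>1 \<phi>2 \<phi>3 continuum_closed_arc by (simp_all add: continuum_def)
    have "cis ` {\<alpha>..\<phi>1} \<union> cis ` {\<phi>2..\<alpha>} \<union> cis ` {\<beta>..\<phi>3} \<subseteq> T"
      using C \<delta>(3,4) by blast
    then show "cis ` {\<alpha>..\<phi>1} \<union> cis ` {\<phi>2..\<alpha>} \<union> cis ` {\<beta>..\<phi>3} \<subseteq> circle \<inter> T"
      by auto
    show "cis ` {\<alpha>..\<phi>1} \<subseteq> insert t1 U1"
      unfolding U1_def \<alpha>\<beta>(1)[symmetric] using \<phi>1 by (intro closed_arc_subset_insert_open_arc(1)) auto
    show "cis ` {\<phi>2..\<alpha>} \<subseteq> insert t1 U2"
      unfolding U2_def \<alpha>\<beta>(1)[symmetric] using \<phi>2 by (intro closed_arc_subset_insert_open_arc(2)) auto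
    show "cis ` {\<phi>2..\<alpha>} \<inter> U1 = {}"
      by fact
    show "cis ` {\<beta>..\<phi>3} \<inter> (U1 \<union> U2) = {}"
      using U C(3) \<delta>(5) by blast
    show "t1 \<in> cis ` {\<alpha>..\<phi>1}" "t1 \<in> cis ` {\<phi>2..\<alpha>}" "t2 \<in> cis ` {\<beta>..\<phi>3}"
      unfolding \<alpha>\<beta>[symmetric] using \<phi>1 \<phi>2 \<phi>3 by auto
    show "cis \<phi>1 \<in> cis ` {\<alpha>..\<phi>1}" "cis \<phi>2 \<in> cis ` {\<phi>2..\<alpha>}" "cis \<phi>3 \<in> cis ` {\<beta>..\<phi>3}"
      using \<phi>1 \<phi>2 \<phi>3 by auto
    show "{cis \<phi>1, cis \<phi>2, cis \<phi>3} \<subseteq> inj_points circle g"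
      using \<phi>1 \<phi>2 \<phi>3 by blast
  qed
qed

lemma almost_injective_edge_fibre_unique:
  fixes g :: "complex \<Rightarrow> 'a::metric_space"
  assumes "continuous_on circle g" "g ` circle = X" and ai: "almost_injective circle g"
    and "edge X E"
    and t: "t1 \<in> circle" "t2 \<in> circle" "g t1 \<in> E" "g t2 = g t1"
  shows "t2 = t1"
proof (rule ccontr)
  assume "t2 \<noteq> t1"
  define Q where "Q = {s \<in> circle. g s \<in> E}"
  have Q: "Q \<subseteq> circle" "t1 \<in> Q" "t2 \<in> Q"
    unfolding Q_def using t by auto
  obtain T where T: "open T" "Q = circle \<inter> T"
    using openin_edge_preimage[OF assms(4,1,2)] openin_open unfolding Q_def by blast
  obtain F :: "complex \<Rightarrow> real" where cont: "continuous_on {s \<in> circle. g s \<in> E} F"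
    and F: "\<And>s s'. g s \<in> E \<Longrightarrow> g s' \<in> E \<Longrightarrow> F s = F s' \<longleftrightarrow> g s = g s'"
    using edge_preimage_coordinate[OF assms(4,1)] by blast
  have cont_F: "continuous_on Q F"
    unfolding Q_def by (rule cont)
  have fibres: "g s = g s'" if "s \<in> Q" "s' \<in> Q" "F s = F s'" for s s'
    using F that unfolding Q_def by blast
  have off_level: "F b - F t1 \<noteq> 0" if "b \<in> Q" "b \<in> inj_points circle g" for b
  proof
    assume "F b - F t1 = 0"
    then have "g t1 = g b"
      using fibres[OF Q(2) that(1)] by simp
    then have "t1 = b" "t2 = b"
      using inj_pointsD[OF that(2)] t by auto
    then show False
      using \<open>t2 \<noteq> t1\<close> by simp
  qed
  have "t1 \<in> circle \<inter> T" "t2 \<in> circle \<inter> T" "t1 \<noteq> t2"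
    using Q T(2) \<open>t2 \<noteq> t1\<close> by auto
  then obtain U1 U2 C1 C2 C3 b1 b2 b3 where
    U: "openin (top_of_set circle) U1" "openin (top_of_set circle) U2" "U1 \<union> U2 \<subseteq> T"
    and C: "connected C1" "connected C2" "connected C3" "C1 \<union> C2 \<union> C3 \<subseteq> circle \<inter> T"
      "C1 \<subseteq> insert t1 U1" "C2 \<subseteq> insert t1 U2" "C2 \<inter> U1 = {}" "C3 \<inter> (U1 \<union> U2) = {}"
      "t1 \<in> C1" "t1 \<in> C2" "t2 \<in> C3"
    and b: "b1 \<in> C1" "b2 \<in> C2" "b3 \<in> C3" "{b1, b2, b3} \<subseteq> inj_points circle g"
    by (rule circle_three_branches[OF ai T(1)])
  have "U1 \<subseteq> circle" "U2 \<subseteq> circle"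
    using openin_subset[OF U(1)] openin_subset[OF U(2)] by simp_all
  then have UQ: "U1 \<subseteq> Q" "U2 \<subseteq> Q"
    using U(3) T(2) by blast+
  have CQ: "C2 \<subseteq> Q - U1" "C3 \<subseteq> Q - U1" "C3 \<subseteq> Q - U2"
    using C(4,7,8) T(2) by blast+
  have level: "F t2 = F t1" "F t1 = F t1"
    using F t(3,4) by simp_all
  have "b1 \<in> Q" "b2 \<in> Q" "b3 \<in> Q"
    using b(1-3) C(4) T(2) by blast+
  then have "F b1 - F t1 \<noteq> 0" "F b2 - F t1 \<noteq> 0" "F b3 - F t1 \<noteq> 0"
    using off_level b(4) by blast+
  then consider "0 < (F b1 - F t1) * (F b2 - F t1)" | "0 < (F b1 - F t1) * (F b3 - F t1)"
    | "0 < (F b2 - F t1) * (F b3 - F t1)"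
    using two_of_three_same_sign by blast
  then show False
  proof cases
    case 1
    show False
      by (rule parallel_branches_contradiction[OF ai Q(1) cont_F fibres U(1) UQ(1) C(1,5,9) b(1)
            Q(2) C(2) CQ(1) C(10) b(2) level(2) 1])
  next
    case 2
    show False
      by (rule parallel_branches_contradiction[OF ai Q(1) cont_F fibres U(1) UQ(1) C(1,5,9) b(1)
            Q(2) C(3) CQ(2) C(11) b(3) level(1) 2])
  next
    case 3
    show False
      by (rule parallel_branches_contradiction[OF ai Q(1) cont_F fibres U(2) UQ(2) C(2,6,10) b(2)
            Q(2) C(3) CQ(3) C(11) b(3) level(1) 3])
  qed
qed

lemma almost_injective_imp_edgewise_eulerian:
  fixes g :: "complex \<Rightarrow> 'a::metric_space"
  assumes "continuous_on circle g" "g ` circle = X" "almost_injective circle g"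
  shows "edgewise_eulerian circle X g"
  unfolding edgewise_eulerian_def
proof
  fix x assume x: "x \<in> edge_union X"
  then obtain E where E: "edge X E" "x \<in> E"
    unfolding edge_union_def by blast
  have "x \<in> g ` circle"
    using x edge_union_subset assms(2) by blast
  then obtain t where t: "t \<in> circle" "g t = x"
    by blast
  have "s = t" if "s \<in> circle" "g s = x" for s
  proof (rule almost_injective_edge_fibre_unique[OF assms E(1) t(1) that(1)])
    show "g t \<in> E" "g s = g t"
      using t(2) that(2) E(2) by simp_all
  qed
  then have "{s \<in> circle. g s = x} = {t}"
    using t by blast
  then show "\<exists>t. {s \<in> circle. g s = x} = {t}"
    by blast
qed

theorem theorem2p3:
  fixes g :: "complex \<Rightarrow> 'a::metric_space" and X :: "'a set"
  assumes "continuous_on circle g" and "g ` circle = X" and "peano_continuum X"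
  shows "(arcwise_increasing circle g \<longleftrightarrow> hereditarily_irreducible circle g)
       \<and> (hereditarily_irreducible circle g \<longleftrightarrow> strongly_irreducible circle g)
       \<and> (strongly_irreducible circle g \<longleftrightarrow> almost_injective circle g)
       \<and> (almost_injective circle g \<longleftrightarrow> irreducible_map circle g)
       \<and> (peano_graph X \<longrightarrow>
            (irreducible_map circle g \<longleftrightarrow>
               edgewise_eulerian circle X g \<and> zero_dimensional {s \<in> circle. g s \<in> Gr X}))"
proof -
  let ?P = "{s \<in> circle. g s \<in> Gr X}"
  have a_e: "arcwise_increasing circle g \<Longrightarrow> irreducible_map circle g"
    by (rule arcwise_increasing_imp_irreducible)
  have e_d: "irreducible_map circle g \<Longrightarrow> almost_injective circle g"
    by (rule irreducible_imp_almost_injective[OF assms(1)])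
  have d_b: "almost_injective circle g \<Longrightarrow> hereditarily_irreducible circle g"
    by (rule almost_injective_imp_hereditarily_irreducible)
  have b_a: "hereditarily_irreducible circle g \<Longrightarrow> arcwise_increasing circle g"
    by (rule hereditarily_irreducible_imp_arcwise_increasing)
  have d_c: "almost_injective circle g \<Longrightarrow> strongly_irreducible circle g"
    by (rule almost_injective_imp_strongly_irreducible)
  have c_e: "strongly_irreducible circle g \<Longrightarrow> irreducible_map circle g"
    by (rule strongly_irreducible_imp_irreducible)
  have d_f: "edgewise_eulerian circle X g \<and> zero_dimensional ?P"
    if "peano_graph X" "almost_injective circle g"
  proof
    show "edgewise_eulerian circle X g"
      by (rule almost_injective_imp_edgewise_eulerian[OF assms(1,2) that(2)])
    show "zero_dimensional ?P"
    proof (rule circle_empty_interior_imp_zero_dimensional)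
      fix W assume "openin (top_of_set circle) W" "W \<subseteq> ?P"
      with that show "W = {}"
        by (intro Gr_preimage_empty_interior[OF compact_circle assms(1,2)] d_c)
          (auto simp: peano_graph_def)
    qed blast
  qed
  have f_d: "almost_injective circle g" if "edgewise_eulerian circle X g" "zero_dimensional ?P"
    using assms(2) that(1) circle_zero_dimensional_imp_empty_interior[OF that(2)]
    by (rule edgewise_eulerian_imp_almost_injective)
  show ?thesis
    using a_e e_d d_b b_a d_c c_e d_f f_d by blast
qed

end
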